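(* Let $\alpha$ be an expanding algebraic number, $\mathcal{D}\subset\mathbb{Z}[\alpha]$ a standard digit set for $\alpha$, and $m\in\mathbb{Z}$ with $\mathcal{D}\subset\alpha^m\mathbb{Z}[\alpha^{-1}]$. Suppose $\mathcal{D}$ contains a complete residue system of $\alpha^m\mathbb{Z}[\alpha^{-1}]/\alpha^{m-1}\mathbb{Z}[\alpha^{-1}]$. Then for every $x\in\Lambda_{\alpha,m}$ there is $d\in\mathcal{D}$ with $\alpha x+d\in\Lambda_{\alpha,m}$, and consequently $\mathcal{G}(x)\neq\emptyset$.
   Context: $\alpha$ is an algebraic number all of whose conjugates have modulus $>1$. $K=\mathbb{Q}(\alpha)$, $\alpha\mathcal{O}_K=\mathfrak{a}/\mathfrak{b}$ with coprime integral ideals; $S_\alpha$ = infinite primes together with primes dividing $\mathfrak{b}$; $\mathbb{K}_\alpha=\prod_{\mathfrak{p}\in S_\alpha}K_\mathfrak{p}$ (completions), $\Phi_\alpha$ diagonal embedding. $\mathcal{D}$ standard: complete residue system of $\mathbb{Z}[\alpha]/\alpha\mathbb{Z}[\alpha]$. $\mathcal{F}=\{\sum_{k\ge1}\Phi_\alpha(d_k\alpha^{-k}):d_k\in\mathcal{D}\}$; $\mathcal{G}(x)=\{(z_\mathfrak{p})\in\mathcal{F}+\Phi_\alpha(x): z_\mathfrak{p}=0\ \forall\mathfrak{p}\mid\mathfrak{b}\}$. $\Lambda_{\alpha,k}=\mathbb{Z}[\alpha]\cap\alpha^{k-1}\mathbb{Z}[\alpha^{-1}]$. *)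

theory Defs
  imports "HOL-Computational_Algebra.Polynomial" Complex_Main
begin

text \<open>Conjugates of an algebraic number: the roots of its minimal polynomial, i.e.
  the complex numbers that are roots of every integer polynomial vanishing at it.\<close>
definition conjugate :: "complex \<Rightarrow> complex \<Rightarrow> bool" where
  "conjugate a b \<longleftrightarrow> (\<forall>p :: complex poly. (\<forall>i. coeff p i \<in> \<int>) \<longrightarrow> poly p a = 0 \<longrightarrow> poly p b = 0)"

definition expanding :: "complex \<Rightarrow> bool" where
  "expanding a \<longleftrightarrow> algebraic a \<and> (\<forall>b. conjugate a b \<longrightarrow> 1 < cmod b)"

definition Zring :: "complex \<Rightarrow> complex set" where
  "Zring a = {poly p a | p :: complex poly. \<forall>i. coeff p i \<in> \<int>}"

definition Qfield :: "complex \<Rightarrow> complex set" where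
  "Qfield a = {poly p a / poly q a | p q :: complex poly.
      (\<forall>i. coeff p i \<in> \<rat>) \<and> (\<forall>i. coeff q i \<in> \<rat>) \<and> poly q a \<noteq> 0}"

definition OK :: "complex \<Rightarrow> complex set" where
  "OK a = {z \<in> Qfield a. algebraic_int z}"

definition smult_set :: "complex \<Rightarrow> complex set \<Rightarrow> complex set" where
  "smult_set u S = (\<lambda>y. u * y) ` S"

definition Lambda :: "complex \<Rightarrow> int \<Rightarrow> complex set" where
  "Lambda a k = Zring a \<inter> smult_set (a powi (k - 1)) (Zring (inverse a))"

definition standard_digits :: "complex \<Rightarrow> complex set \<Rightarrow> bool" where
  "standard_digits a D \<longleftrightarrow> D \<subseteq> Zring a \<and>
     (\<forall>z \<in> Zring a. \<exists>!d. d \<in> D \<and> z - d \<in> smult_set a (Zring a))"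

definition prime_ideal_OK :: "complex \<Rightarrow> complex set \<Rightarrow> bool" where
  "prime_ideal_OK a P \<longleftrightarrow> P \<subseteq> OK a \<and> 0 \<in> P \<and> P \<noteq> {0} \<and> P \<noteq> OK a \<and>
     (\<forall>x \<in> P. \<forall>y \<in> P. x + y \<in> P) \<and>
     (\<forall>x \<in> P. \<forall>r \<in> OK a. r * x \<in> P) \<and>
     (\<forall>x \<in> OK a. \<forall>y \<in> OK a. x * y \<in> P \<longrightarrow> x \<in> P \<or> y \<in> P)"

fun ideal_pow :: "complex \<Rightarrow> complex set \<Rightarrow> nat \<Rightarrow> complex set" where
  "ideal_pow a P 0 = OK a"
| "ideal_pow a P (Suc n) = {\<Sum>i\<in>I. f i * g i | (I :: nat set) f g. finite I \<and>
       (\<forall>i\<in>I. f i \<in> ideal_pow a P n \<and> g i \<in> P)}"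

definition localize :: "complex \<Rightarrow> complex set \<Rightarrow> complex set \<Rightarrow> complex set" where
  "localize a P S = {s / t | s t. s \<in> S \<and> t \<in> OK a - P}"

text \<open>\<open>P\<close> divides the denominator ideal \<open>\<b>\<close> of \<open>a\<O>_K = \<a>/\<b>\<close> iff \<open>v_P(a) < 0\<close>,
  i.e. iff \<open>a\<close> is not in the local ring \<open>\<O>_{K,(P)}\<close>.\<close>
definition divides_denom :: "complex \<Rightarrow> complex set \<Rightarrow> bool" where
  "divides_denom a P \<longleftrightarrow> prime_ideal_OK a P \<and> a \<notin> localize a P (OK a)"

definition padic_tendsto_zero :: "complex \<Rightarrow> complex set \<Rightarrow> (nat \<Rightarrow> complex) \<Rightarrow> bool" where
  "padic_tendsto_zero a P s \<longleftrightarrow>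
     (\<forall>N. \<exists>n0. \<forall>n\<ge>n0. s n \<in> localize a P (ideal_pow a P N))"

text \<open>\<open>\<G>(x) \<noteq> \<emptyset>\<close>: there is a digit sequence \<open>(d_k)_{k\<ge>1}\<close> such that the
  \<open>P\<close>-component of \<open>\<Sum>_{k\<ge>1} \<Phi>(d_k a^-k) + \<Phi>(x)\<close> vanishes for every \<open>P | \<b>\<close>
  (the components at infinite places are unconstrained).\<close>
definition G_nonempty :: "complex \<Rightarrow> complex set \<Rightarrow> complex \<Rightarrow> bool" where
  "G_nonempty a D x \<longleftrightarrow> (\<exists>d :: nat \<Rightarrow> complex. (\<forall>k\<ge>1. d k \<in> D) \<and>
     (\<forall>P. divides_denom a P \<longrightarrow>
        padic_tendsto_zero a P (\<lambda>n. x + (\<Sum>k=1..n. d k / a ^ k))))"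

end

theory Submission
  imports Defs "Jordan_Normal_Form.Char_Poly"
begin

(* The residue hypothesis applied to -\<alpha>x yields a digit d with \<alpha>x + d \<in> \<alpha>^(m-1) \<int>[\<alpha>^-1], and
   \<alpha>x + d \<in> \<int>[\<alpha>] because D \<subseteq> \<int>[\<alpha>]. Iterating this step from x gives digits d_k such that
   x + \<Sum>_{k\<le>n} d_k \<alpha>^-k = x_n \<alpha>^-n \<in> \<alpha>^(m-1-n) \<int>[\<alpha>^-1], so it suffices that \<alpha>^-e \<int>[\<alpha>^-1]
   lies in P^N \<O>_{K,(P)} for every prime P | \<b> and e \<ge> N. This follows from writing \<alpha>^-1 = s/t
   with s \<in> P and t \<in> \<O>_K - P. To find s and t, let c_0 + ... + c_n X^n be the primitive integer
   polynomial of \<alpha> and U_j = \<Sum>_{i\<ge>j} c_i \<alpha>^(i-j). Both U_j and \<alpha>U_j are algebraic integers;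
   U_j \<in> P for j \<ge> 1 because \<alpha> \<notin> \<O>_{K,(P)}, and \<alpha>U_j \<notin> P for some j \<ge> 1, since otherwise
   c_j = U_j - \<alpha>U_(j+1) \<in> P for all j, contradicting primitivity. Take s = U_j, t = \<alpha>U_j. *)

section \<open>Subrings of \<complex> and the ring \<open>\<int>[a]\<close>\<close>

definition is_subring :: "complex set \<Rightarrow> bool" where
  "is_subring R \<longleftrightarrow> (\<forall>k. of_int k \<in> R) \<and> (\<forall>x\<in>R. \<forall>y\<in>R. x + y \<in> R \<and> x * y \<in> R)"

lemma subring_of_int: "is_subring R \<Longrightarrow> of_int k \<in> R"
  by (simp add: is_subring_def)

lemma subring_add: "is_subring R \<Longrightarrow> x \<in> R \<Longrightarrow> y \<in> R \<Longrightarrow> x + y \<in> R"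
  by (simp add: is_subring_def)

lemma subring_mult: "is_subring R \<Longrightarrow> x \<in> R \<Longrightarrow> y \<in> R \<Longrightarrow> x * y \<in> R"
  by (simp add: is_subring_def)

lemma subring_minus: "is_subring R \<Longrightarrow> x \<in> R \<Longrightarrow> - x \<in> R"
  using subring_mult[OF _ subring_of_int[of R "-1"]] by fastforce

lemma subring_diff: "is_subring R \<Longrightarrow> x \<in> R \<Longrightarrow> y \<in> R \<Longrightarrow> x - y \<in> R"
  by (metis diff_conv_add_uminus subring_add subring_minus)

lemma subring_power: "is_subring R \<Longrightarrow> x \<in> R \<Longrightarrow> x ^ k \<in> R"
  by (induction k) (auto intro: subring_mult subring_of_int[of R 1, simplified])

lemma subring_sum: "is_subring R \<Longrightarrow> (\<And>i. i \<in> I \<Longrightarrow> f i \<in> R) \<Longrightarrow> sum f I \<in> R"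
  by (induction I rule: infinite_finite_induct)
     (auto intro: subring_add subring_of_int[of R 0, simplified])

definition int_coeffs :: "complex poly \<Rightarrow> bool" where
  "int_coeffs p \<longleftrightarrow> (\<forall>i. coeff p i \<in> \<int>)"

lemma int_coeffs_pCons_iff: "int_coeffs (pCons c p) \<longleftrightarrow> c \<in> \<int> \<and> int_coeffs p"
  by (auto simp: int_coeffs_def coeff_pCons split: nat.splits)

lemma Zring_iff_int_coeffs: "z \<in> Zring a \<longleftrightarrow> (\<exists>p. int_coeffs p \<and> z = poly p a)"
  by (auto simp: Zring_def int_coeffs_def)

lemma is_subring_Zring: "is_subring (Zring a)"
  unfolding is_subring_def
proof (rule conjI; (intro allI ballI)?)
  fix k :: int
  show "of_int k \<in> Zring a"
    unfolding Zring_iff_int_coeffs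
    by (intro exI[of _ "[:of_int k:]"]) (auto simp: int_coeffs_def coeff_pCons split: nat.splits)
next
  fix x y assume "x \<in> Zring a" "y \<in> Zring a"
  then obtain p q where "int_coeffs p" "int_coeffs q" "x = poly p a" "y = poly q a"
    unfolding Zring_iff_int_coeffs by blast
  moreover have "int_coeffs (p + q)" "int_coeffs (p * q)"
    using \<open>int_coeffs p\<close> \<open>int_coeffs q\<close>
    by (auto simp: int_coeffs_def coeff_mult intro!: Ints_sum Ints_mult)
  ultimately show "x + y \<in> Zring a \<and> x * y \<in> Zring a"
    unfolding Zring_iff_int_coeffs by (metis poly_add poly_mult)
qed

lemma generator_in_Zring: "a \<in> Zring a"
  unfolding Zring_iff_int_coeffs
  by (intro exI[of _ "[:0, 1:]"]) (auto simp: int_coeffs_def coeff_pCons split: nat.splits)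

lemma Zring_subset_Qfield: "Zring a \<subseteq> Qfield a"
  unfolding Zring_def Qfield_def
  by (force intro: exI[of _ 1] simp: coeff_1 Ints_subset_Rats[THEN subsetD])

lemma of_int_in_OK: "of_int k \<in> OK a"
  using Zring_subset_Qfield subring_of_int[OF is_subring_Zring] by (auto simp: OK_def)

lemma poly_quotient_in_subring:
  assumes R: "is_subring R" and s: "s \<in> R" and t: "t \<in> R" "t \<noteq> 0"
  shows "int_coeffs q \<Longrightarrow> \<exists>w e. w \<in> R \<and> poly q (s / t) = w / t ^ e"
proof (induction q)
  case 0
  show ?case using subring_of_int[OF R, of 0] by (intro exI[of _ 0]) auto
next
  case (pCons c q)
  then obtain k where k: "c = of_int k" and "int_coeffs q"
    by (auto simp: int_coeffs_pCons_iff elim: Ints_cases)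
  then obtain w e where w: "w \<in> R" "poly q (s / t) = w / t ^ e" using pCons.IH by blast
  have "poly (pCons c q) (s / t) = (of_int k * t ^ Suc e + s * w) / t ^ Suc e"
    using w(2) t(2) k by (simp add: field_simps)
  moreover have "of_int k * t ^ Suc e + s * w \<in> R"
    using R s t(1) w(1) by (intro subring_add subring_mult subring_of_int subring_power)
  ultimately show ?case by blast
qed

section \<open>Prime ideals of \<open>\<O>_K\<close>\<close>

lemma prime_ideal_OK_one_notin:
  assumes "prime_ideal_OK a P" shows "1 \<notin> P"
proof
  assume "1 \<in> P"
  then have "OK a \<subseteq> P" using assms unfolding prime_ideal_OK_def by (metis mult.right_neutral subsetI)
  then show False using assms unfolding prime_ideal_OK_def by blast
qed

lemma prime_ideal_OK_of_int_mult:
  "prime_ideal_OK a P \<Longrightarrow> x \<in> P \<Longrightarrow> of_int k * x \<in> P"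
  using of_int_in_OK unfolding prime_ideal_OK_def by blast

lemma prime_ideal_OK_diff:
  assumes "prime_ideal_OK a P" "x \<in> P" "y \<in> P" shows "x - y \<in> P"
  using prime_ideal_OK_of_int_mult[OF assms(1,3), of "-1"] assms(1,2)
  unfolding prime_ideal_OK_def by (metis diff_conv_add_uminus mult_minus1 of_int_1 of_int_minus)

lemma prime_ideal_OK_power_notin:
  assumes "prime_ideal_OK a P" "\<And>k. t ^ k \<in> OK a" "t \<notin> P"
  shows "t ^ k \<notin> P"
proof (induction k)
  case 0 show ?case using prime_ideal_OK_one_notin[OF assms(1)] by simp
next
  case (Suc k)
  then show ?case using assms power_Suc[of t k] power_one_right[of t]
    unfolding prime_ideal_OK_def by metis
qed

text \<open>Since \<open>content\<close> is a \<open>gcd\<close> of the coefficients, Bezout's identity puts it into the ideal.\<close>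

lemma of_int_content_in_prime_ideal:
  assumes P: "prime_ideal_OK a P"
  shows "(\<And>i. of_int (coeff q i) \<in> P) \<Longrightarrow> of_int (content q) \<in> P"
proof (induction q)
  case 0
  then show ?case using P by (simp add: prime_ideal_OK_def)
next
  case (pCons x q)
  have x: "of_int x \<in> P" and cq: "of_int (content q) \<in> P"
    using pCons.prems pCons.IH[OF pCons.prems[of "Suc _", simplified]] by (metis coeff_pCons_0)+
  obtain u v where uv: "u * x + v * content q = gcd x (content q)" using bezout_int by blast
  have "content (pCons x q) = gcd x (content q)"
    by (cases "pCons x q = 0") (auto simp: content_def coeffs_pCons_eq_cCons cCons_def gcd.commute)
  then have "(of_int (content (pCons x q)) :: complex) = of_int u * of_int x + of_int v * of_int (content q)"
    unfolding uv[symmetric] by simp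
  also have "\<dots> \<in> P"
    using P prime_ideal_OK_of_int_mult[OF P x] prime_ideal_OK_of_int_mult[OF P cq]
    unfolding prime_ideal_OK_def by blast
  finally show ?case .
qed

lemma power_mult_in_ideal_pow:
  assumes "s \<in> P" "w \<in> OK a"
  shows "s ^ j * w \<in> ideal_pow a P j"
proof (induction j)
  case 0 then show ?case using assms by simp
next
  case (Suc j)
  have "s ^ Suc j * w = (\<Sum>i\<in>{0::nat}. (\<lambda>_. s ^ j * w) i * (\<lambda>_. s) i)" by simp
  then show ?case using Suc assms(1)
    by (simp only: ideal_pow.simps)
       (intro CollectI exI[of _ "{0::nat}"] exI[of _ "\<lambda>_. s ^ j * w"] exI[of _ "\<lambda>_. s"], auto)
qed

section \<open>The primitive integer polynomial of an algebraic number\<close>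

lemma algebraic_int_eigenvalue_int_matrix:
  fixes x :: complex and v :: "nat \<Rightarrow> complex" and A :: "nat \<Rightarrow> nat \<Rightarrow> int"
  assumes "i0 < n" "v i0 \<noteq> 0"
    and eigen: "\<And>i. i < n \<Longrightarrow> x * v i = (\<Sum>j<n. of_int (A i j) * v j)"
  shows "algebraic_int x"
proof -
  define B where "B = mat n n (\<lambda>(i, j). A i j)"
  define C where "C = map_mat (of_int :: int \<Rightarrow> complex) B"
  define w where "w = vec n v"
  have B: "B \<in> carrier_mat n n" and C: "C \<in> carrier_mat n n"
    unfolding B_def C_def by simp_all
  have "C *\<^sub>v w = x \<cdot>\<^sub>v w"
  proof (rule eq_vecI)
    fix i assume "i < dim_vec (x \<cdot>\<^sub>v w)"
    then have i: "i < n" by (simp add: w_def)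
    have "(C *\<^sub>v w) $ i = (\<Sum>j<n. of_int (A i j) * v j)"
      using i C by (simp add: C_def B_def w_def scalar_prod_def lessThan_atLeast0)
    then show "(C *\<^sub>v w) $ i = (x \<cdot>\<^sub>v w) $ i"
      using eigen[OF i] i by (simp add: w_def)
  qed (use C in \<open>simp add: w_def\<close>)
  moreover have "w \<noteq> 0\<^sub>v n"
    using assms(1,2) by (auto simp: w_def dest: arg_cong[of _ _ "\<lambda>u. u $ i0"])
  ultimately have "eigenvalue C x"
    using C unfolding eigenvalue_def eigenvector_def by (auto simp: w_def intro!: exI[of _ w])
  then have "poly (char_poly C) x = 0" using eigenvalue_root_char_poly[OF C] by simp
  moreover have "char_poly C = map_poly of_int (char_poly B)"
    unfolding C_def by (rule of_int_hom.char_poly_hom[OF B])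
  moreover have "lead_coeff (char_poly B) = 1" using degree_monic_char_poly[OF B] by simp
  ultimately show ?thesis unfolding algebraic_int_altdef_ipoly by auto
qed

locale primitive_annihilator =
  fixes a :: complex and g :: "int poly" and n :: nat
  assumes nonzero: "a \<noteq> 0" and primitive: "content g = 1"
    and root: "(\<Sum>i\<le>n. of_int (coeff g i) * a ^ i) = 0"
    and degree: "n = degree g"
begin

definition c :: "nat \<Rightarrow> complex" where "c i = of_int (coeff g i)"

lemma degree_pos: "n \<ge> 1"
proof (rule ccontr)
  assume "\<not> n \<ge> 1"
  then have "n = 0" by simp
  then have "coeff g 0 = 0" using root by simp
  then have "g = 0" using degree \<open>n = 0\<close> by (metis leading_coeff_0_iff)
  then show False using primitive by simp
qed

text \<open>Elements of \<open>\<int>[a]\<close> that preserve the lattice spanned by \<open>1, a, \<dots>, a^(n-1)\<close> act on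
  it by integer matrices, hence are algebraic integers.\<close>

definition span :: "complex set" where
  "span = {\<Sum>l<n. of_int (b l) * a ^ l | b :: nat \<Rightarrow> int. True}"

definition multiplier_ring :: "complex set" where
  "multiplier_ring = {z \<in> Zring a. \<forall>w\<in>span. z * w \<in> span}"

lemma span_intro: "x = (\<Sum>l<n. of_int (b l) * a ^ l) \<Longrightarrow> x \<in> span"
  unfolding span_def by blast

lemma span_add:
  assumes "x \<in> span" "y \<in> span" shows "x + y \<in> span"
proof -
  obtain b b' where "x = (\<Sum>l<n. of_int (b l) * a ^ l)" "y = (\<Sum>l<n. of_int (b' l) * a ^ l)"
    using assms unfolding span_def by blast
  then show ?thesis by (intro span_intro[of _ "\<lambda>l. b l + b' l"]) (simp add: sum.distrib distrib_right)
qed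

lemma span_of_int_mult:
  assumes "x \<in> span" shows "of_int k * x \<in> span"
proof -
  obtain b where "x = (\<Sum>l<n. of_int (b l) * a ^ l)"
    using assms unfolding span_def by blast
  then show ?thesis by (intro span_intro[of _ "\<lambda>l. k * b l"]) (simp add: sum_distrib_left mult.assoc)
qed

lemma span_minus: "x \<in> span \<Longrightarrow> - x \<in> span"
  using span_of_int_mult[of x "-1"] by simp

lemma span_sum: "(\<And>i. i \<in> I \<Longrightarrow> f i \<in> span) \<Longrightarrow> sum f I \<in> span"
  using span_intro[of 0 "\<lambda>_. 0"]
  by (induction I rule: infinite_finite_induct) (auto intro: span_add)

lemma span_monom:
  assumes "e < n" shows "of_int k * a ^ e \<in> span"
proof (rule span_intro[of _ "\<lambda>l. if l = e then k else 0"])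
  have "(\<Sum>l<n. of_int (if l = e then k else 0) * a ^ l) = (\<Sum>l<n. if l = e then of_int k * a ^ l else 0)"
    by (intro sum.cong) auto
  then show "of_int k * a ^ e = (\<Sum>l<n. of_int (if l = e then k else 0) * a ^ l)"
    using assms by simp
qed

lemma multiplier_ring_intro:
  assumes "z \<in> Zring a" "\<And>l. l < n \<Longrightarrow> z * a ^ l \<in> span"
  shows "z \<in> multiplier_ring"
  unfolding multiplier_ring_def
proof (intro CollectI conjI ballI)
  fix w assume "w \<in> span"
  then obtain b :: "nat \<Rightarrow> int" where "w = (\<Sum>l<n. of_int (b l) * a ^ l)" unfolding span_def by blast
  then have "z * w = (\<Sum>l<n. of_int (b l) * (z * a ^ l))"
    by (simp add: sum_distrib_left algebra_simps)
  then show "z * w \<in> span" using assms(2) by (auto intro!: span_sum span_of_int_mult)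
qed (use assms in auto)

lemma is_subring_multiplier_ring: "is_subring multiplier_ring"
  unfolding is_subring_def multiplier_ring_def
  using subring_of_int[OF is_subring_Zring] subring_add[OF is_subring_Zring]
    subring_mult[OF is_subring_Zring] span_of_int_mult span_add
  by (auto simp: distrib_right mult.assoc)

lemma multiplier_ring_algebraic_int:
  assumes z: "z \<in> multiplier_ring" shows "algebraic_int z"
proof -
  have "\<forall>i. \<exists>b :: nat \<Rightarrow> int. i < n \<longrightarrow> z * a ^ i = (\<Sum>l<n. of_int (b l) * a ^ l)"
    using z span_monom[of _ 1] unfolding multiplier_ring_def span_def by force
  then obtain B where "\<And>i. i < n \<Longrightarrow> z * a ^ i = (\<Sum>l<n. of_int (B i l) * a ^ l)"
    by metis
  then show ?thesis
    using degree_pos by (intro algebraic_int_eigenvalue_int_matrix[of 0 n "\<lambda>l. a ^ l"]) auto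
qed

lemma multiplier_ring_subset_OK: "multiplier_ring \<subseteq> OK a"
  using multiplier_ring_algebraic_int Zring_subset_Qfield
  unfolding OK_def multiplier_ring_def by blast

definition U :: "nat \<Rightarrow> complex" where
  "U j = (\<Sum>i=j..n. c i * a ^ (i - j))"

lemma U_times_power: "U j * a ^ j = (\<Sum>i=j..n. c i * a ^ i)"
  unfolding U_def sum_distrib_right
  by (intro sum.cong refl) (auto simp: mult.assoc power_add[symmetric])

lemma U_times_power_eq: assumes "j \<le> n" shows "U j * a ^ j = - (\<Sum>i<j. c i * a ^ i)"
proof -
  have "{..n} = {..<j} \<union> {j..n}" using assms by auto
  then have "(\<Sum>i\<le>n. c i * a ^ i) = (\<Sum>i<j. c i * a ^ i) + (\<Sum>i=j..n. c i * a ^ i)"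
    by (simp add: sum.union_disjoint ivl_disj_int)
  then show ?thesis using root unfolding c_def U_times_power[unfolded c_def]
    by (simp add: eq_neg_iff_add_eq_0 add.commute)
qed

lemma U_0: "U 0 = 0"
  using U_times_power_eq[of 0] by simp

lemma U_degree: "U n = c n"
  unfolding U_def by simp

lemma U_Suc: assumes "j < n" shows "a * U (Suc j) = U j - c j"
proof -
  have "U j = c j + (\<Sum>i=Suc j..n. c i * a ^ (i - j))"
    unfolding U_def using assms by (simp add: sum.atLeast_Suc_atMost)
  moreover have "(\<Sum>i=Suc j..n. c i * a ^ (i - j)) = a * U (Suc j)"
    unfolding U_def sum_distrib_left
    by (intro sum.cong refl) (auto simp: Suc_diff_Suc[symmetric] simp del: Suc_diff_Suc)
  ultimately show ?thesis by simp
qed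

lemma U_in_multiplier_ring: assumes "j \<le> n" shows "U j \<in> multiplier_ring"
proof (rule multiplier_ring_intro)
  show "U j \<in> Zring a"
    unfolding U_def c_def
    by (intro subring_sum[OF is_subring_Zring] subring_mult[OF is_subring_Zring]
        subring_of_int[OF is_subring_Zring] subring_power[OF is_subring_Zring] generator_in_Zring)
next
  fix l assume l: "l < n"
  show "U j * a ^ l \<in> span"
  proof (cases "l < j")
    case True
    have "U j * a ^ l = (\<Sum>i=j..n. c i * a ^ (i - j + l))"
      unfolding U_def sum_distrib_right by (simp add: mult.assoc power_add[symmetric])
    also have "\<dots> \<in> span"
      using True by (intro span_sum) (auto simp: c_def intro!: span_monom)
    finally show ?thesis .
  next
    case False
    have "U j * a ^ l = (U j * a ^ j) * a ^ (l - j)"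
      using False by (simp add: mult.assoc power_add[symmetric])
    also have "\<dots> = - (\<Sum>i<j. c i * a ^ (i + (l - j)))"
      using U_times_power_eq[OF assms] by (simp add: sum_distrib_right mult.assoc power_add)
    also have "\<dots> \<in> span"
      using False l by (intro span_minus span_sum) (auto simp: c_def intro!: span_monom)
    finally show ?thesis .
  qed
qed

lemma times_U_in_multiplier_ring: assumes "j < n" shows "a * U (Suc j) \<in> multiplier_ring"
  unfolding U_Suc[OF assms] c_def
  using assms U_in_multiplier_ring
  by (intro subring_diff[OF is_subring_multiplier_ring] subring_of_int[OF is_subring_multiplier_ring]) auto

lemma inverse_eq_quotient_at_denominator_prime:
  assumes "divides_denom a P"
  obtains s t where "s \<in> P" "t \<notin> P" "s \<in> multiplier_ring" "t \<in> multiplier_ring" "inverse a = s / t"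
proof -
  have P: "prime_ideal_OK a P" and not_local: "a \<notin> localize a P (OK a)"
    using assms unfolding divides_denom_def by auto
  have U_in_P: "U (Suc j) \<in> P" if j: "j < n" for j
  proof (rule ccontr)
    assume "U (Suc j) \<notin> P"
    moreover have "U (Suc j) \<noteq> 0" using calculation P by (auto simp: prime_ideal_OK_def)
    moreover have "U (Suc j) \<in> OK a" "a * U (Suc j) \<in> OK a"
      using times_U_in_multiplier_ring[OF j] U_in_multiplier_ring[of "Suc j"] j multiplier_ring_subset_OK
      by auto
    ultimately have "a * U (Suc j) / U (Suc j) \<in> localize a P (OK a)"
      unfolding localize_def by blast
    then show False using not_local \<open>U (Suc j) \<noteq> 0\<close> by simp
  qed
  have "\<exists>j<n. a * U (Suc j) \<notin> P"
  proof (rule ccontr)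
    assume "\<not> ?thesis"
    then have aU_in_P: "\<And>j. j < n \<Longrightarrow> a * U (Suc j) \<in> P" by blast
    have "c i \<in> P" for i
    proof -
      consider "i < n" | "i = n" | "i > n" by linarith
      then show ?thesis
      proof cases
        case 1
        have "U i \<in> P"
          using U_0 U_in_P 1 P by (cases i) (auto simp: prime_ideal_OK_def)
        moreover have "c i = U i - a * U (Suc i)" using U_Suc[OF 1] by simp
        ultimately show ?thesis using prime_ideal_OK_diff[OF P _ aU_in_P[OF 1]] by simp
      next
        case 2
        then show ?thesis using U_in_P[of "n - 1"] degree_pos U_degree by simp
      next
        case 3
        then show ?thesis using degree P by (simp add: c_def coeff_eq_0 prime_ideal_OK_def)
      qed
    qed
    then have "of_int (content g) \<in> P"
      using of_int_content_in_prime_ideal[OF P] unfolding c_def by blast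
    then show False using primitive prime_ideal_OK_one_notin[OF P] by simp
  qed
  then obtain j where j: "j < n" "a * U (Suc j) \<notin> P" by blast
  then have "U (Suc j) \<noteq> 0" using P by (auto simp: prime_ideal_OK_def)
  then have "inverse a = U (Suc j) / (a * U (Suc j))" using nonzero by (simp add: field_simps)
  then show thesis
    using U_in_multiplier_ring[of "Suc j"] j
    by (intro that[OF U_in_P[OF j(1)] j(2) _ times_U_in_multiplier_ring[OF j(1)]]) simp_all
qed

lemma inverse_power_mult_in_localize:
  assumes "divides_denom a P" "y \<in> Zring (inverse a)" "N \<le> e"
  shows "inverse a ^ e * y \<in> localize a P (ideal_pow a P N)"
proof -
  have P: "prime_ideal_OK a P" using assms(1) unfolding divides_denom_def by blast
  obtain s t where st: "s \<in> P" "t \<notin> P" "s \<in> multiplier_ring" "t \<in> multiplier_ring"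
    and inv: "inverse a = s / t"
    using inverse_eq_quotient_at_denominator_prime[OF assms(1)] .
  have t0: "t \<noteq> 0" using st(2) P by (auto simp: prime_ideal_OK_def)
  obtain q where q: "int_coeffs q" "y = poly q (s / t)"
    using assms(2) inv unfolding Zring_iff_int_coeffs by auto
  obtain w k where w: "w \<in> multiplier_ring" "poly q (s / t) = w / t ^ k"
    using poly_quotient_in_subring[OF is_subring_multiplier_ring st(3,4) t0 q(1)] by blast
  have "inverse a ^ e * y = s ^ N * (s ^ (e - N) * w) / t ^ (e + k)"
    using assms(3) q(2) w(2) inv by (simp add: power_divide power_add[symmetric] mult.assoc)
  moreover have "s ^ (e - N) * w \<in> multiplier_ring"
    using st(3) w(1)
    by (intro subring_mult[OF is_subring_multiplier_ring] subring_power[OF is_subring_multiplier_ring])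
  then have "s ^ N * (s ^ (e - N) * w) \<in> ideal_pow a P N"
    using st(1) multiplier_ring_subset_OK by (blast intro: power_mult_in_ideal_pow)
  moreover have "t ^ (e + k) \<in> OK a - P"
    using prime_ideal_OK_power_notin[OF P _ st(2)] multiplier_ring_subset_OK
      subring_power[OF is_subring_multiplier_ring st(4)] by blast
  ultimately show ?thesis unfolding localize_def by blast
qed

end

lemma primitive_annihilator_exists:
  assumes "algebraic a" "a \<noteq> 0"
  shows "\<exists>g. primitive_annihilator a g (degree g)"
proof -
  obtain p where p: "\<And>i. coeff p i \<in> \<int>" "p \<noteq> 0" "poly p a = 0"
    using algebraicE[OF assms(1)] by blast
  define f where "f = map_poly (\<lambda>z. \<lfloor>Re z\<rfloor>) p"
  have pf: "map_poly of_int f = p"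
  proof (rule poly_eqI)
    fix i
    obtain k where "coeff p i = of_int k" using p(1) Ints_cases by metis
    then show "coeff (map_poly of_int f) i = coeff p i" by (simp add: f_def coeff_map_poly)
  qed
  then have f0: "f \<noteq> 0" using p(2) by auto
  define g where "g = primitive_part f"
  have "p = Polynomial.smult (of_int (content f)) (map_poly of_int g)"
    unfolding pf[symmetric] g_def
    by (subst content_times_primitive_part[of f, symmetric]) (rule of_int_hom.map_poly_hom_smult)
  then have "poly (map_poly of_int g) a = (0 :: complex)" using p(3) f0 by simp
  then have "(\<Sum>i\<le>degree g. of_int (coeff g i) * a ^ i) = 0"
    by (simp add: poly_altdef of_int_hom.degree_map_poly_hom coeff_map_poly)
  moreover have "content g = 1" using f0 by (simp add: g_def)
  ultimately show ?thesis using assms(2) by (blast intro: primitive_annihilator.intro)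
qed

section \<open>Digit expansions\<close>

lemma digit_step_in_Lambda:
  assumes "a \<noteq> 0" "D \<subseteq> Zring a"
    and residues: "\<forall>y \<in> smult_set (a powi m) (Zring (inverse a)).
           \<exists>d \<in> D. y - d \<in> smult_set (a powi (m - 1)) (Zring (inverse a))"
    and x: "x \<in> Lambda a m"
  shows "\<exists>d\<in>D. a * x + d \<in> Lambda a m"
proof -
  obtain y where y: "y \<in> Zring (inverse a)" "x = a powi (m - 1) * y"
    using x unfolding Lambda_def smult_set_def by auto
  have "a * a powi (m - 1) = a powi m"
    using assms(1) power_int_add_1'[of a "m - 1"] by simp
  then have "- (a * x) = a powi m * (- y)" using y(2) by (simp add: mult.assoc[symmetric])
  then have "- (a * x) \<in> smult_set (a powi m) (Zring (inverse a))"
    unfolding smult_set_def using subring_minus[OF is_subring_Zring y(1)] by blast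
  then obtain d z where d: "d \<in> D" "z \<in> Zring (inverse a)" "- (a * x) - d = a powi (m - 1) * z"
    using residues unfolding smult_set_def by blast
  have "a * x + d = - (- (a * x) - d)" by simp
  also have "\<dots> = a powi (m - 1) * (- z)" using d(3) by simp
  finally have "a * x + d = a powi (m - 1) * (- z)" .
  then have "a * x + d \<in> smult_set (a powi (m - 1)) (Zring (inverse a))"
    unfolding smult_set_def using subring_minus[OF is_subring_Zring d(2)] by blast
  moreover have "a * x + d \<in> Zring a"
    using d(1) assms(2) x unfolding Lambda_def
    by (blast intro: subring_add[OF is_subring_Zring] subring_mult[OF is_subring_Zring] generator_in_Zring)
  ultimately show ?thesis using d(1) unfolding Lambda_def by blast
qed

lemma partial_sum_digit_orbit:
  fixes a :: "'a :: field"
  assumes "a \<noteq> 0" "\<And>k. xs (Suc k) = a * xs k + d (Suc k)"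
  shows "xs 0 + (\<Sum>k=1..n. d k / a ^ k) = xs n / a ^ n"
proof (induction n)
  case (Suc n)
  then have "xs 0 + (\<Sum>k=1..Suc n. d k / a ^ k) = xs n / a ^ n + d (Suc n) / a ^ Suc n"
    by (simp add: add.assoc[symmetric])
  also have "\<dots> = xs (Suc n) / a ^ Suc n" using assms by (simp add: add_divide_distrib add.commute)
  finally show ?case .
qed simp

lemma G_nonempty_of_digit_steps:
  assumes a0: "a \<noteq> 0"
    and step: "\<And>x. x \<in> Lambda a m \<Longrightarrow> \<exists>d\<in>D. a * x + d \<in> Lambda a m"
    and local: "\<And>P y N e. divides_denom a P \<Longrightarrow> y \<in> Zring (inverse a) \<Longrightarrow> N \<le> e \<Longrightarrow>
                  inverse a ^ e * y \<in> localize a P (ideal_pow a P N)"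
    and x: "x \<in> Lambda a m"
  shows "G_nonempty a D x"
proof -
  obtain digit where digit: "\<And>y. y \<in> Lambda a m \<Longrightarrow> digit y \<in> D \<and> a * y + digit y \<in> Lambda a m"
    using step by metis
  define xs where "xs k = ((\<lambda>y. a * y + digit y) ^^ k) x" for k
  have xs_Suc: "xs (Suc k) = a * xs k + digit (xs k)" for k by (simp add: xs_def)
  have xs_Lambda: "xs k \<in> Lambda a m" for k
    by (induction k) (use x digit in \<open>simp_all add: xs_def\<close>)
  define d where "d k = digit (xs (k - 1))" for k
  have sum: "x + (\<Sum>k=1..n. d k / a ^ k) = xs n / a ^ n" for n
    using partial_sum_digit_orbit[OF a0, of xs d] xs_Suc by (simp add: d_def xs_def)
  have "x + (\<Sum>k=1..n. d k / a ^ k) \<in> localize a P (ideal_pow a P N)"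
    if "divides_denom a P" "n \<ge> nat (int N + m)" for P N n
  proof -
    obtain y where y: "y \<in> Zring (inverse a)" "xs n = a powi (m - 1) * y"
      using xs_Lambda[of n] unfolding Lambda_def smult_set_def by auto
    define e where "e = nat (int n - m + 1)"
    have "a powi (m - 1) = a powi (int n - int e)" using that(2) by (simp add: e_def)
    also have "\<dots> = a ^ n / a ^ e" using a0 by (simp add: power_int_diff)
    finally have "xs n / a ^ n = inverse a ^ e * y"
      using a0 y(2) by (simp add: field_simps power_inverse)
    moreover have "N \<le> e" using that(2) by (simp add: e_def)
    ultimately show ?thesis using local[OF that(1) y(1)] sum by simp
  qed
  moreover have "d k \<in> D" if "k \<ge> 1" for k
    using digit xs_Lambda by (simp add: d_def)
  ultimately show ?thesis
    unfolding G_nonempty_def padic_tendsto_zero_def by blast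
qed

theorem lemma6p10:
  fixes \<alpha> :: complex and D :: "complex set" and m :: int
  assumes "expanding \<alpha>"
    and "standard_digits \<alpha> D"
    and "D \<subseteq> smult_set (\<alpha> powi m) (Zring (inverse \<alpha>))"
    and "\<forall>y \<in> smult_set (\<alpha> powi m) (Zring (inverse \<alpha>)).
           \<exists>d \<in> D. y - d \<in> smult_set (\<alpha> powi (m - 1)) (Zring (inverse \<alpha>))"
  shows "(\<forall>x \<in> Lambda \<alpha> m. \<exists>d \<in> D. \<alpha> * x + d \<in> Lambda \<alpha> m) \<and>
         (\<forall>x \<in> Lambda \<alpha> m. G_nonempty \<alpha> D x)"
proof -
  have "Defs.conjugate \<alpha> \<alpha>" unfolding Defs.conjugate_def by blast
  then have a0: "\<alpha> \<noteq> 0" using assms(1) unfolding expanding_def by fastforce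
  have step: "\<forall>x \<in> Lambda \<alpha> m. \<exists>d \<in> D. \<alpha> * x + d \<in> Lambda \<alpha> m"
    using digit_step_in_Lambda[OF a0 _ assms(4)] assms(2) unfolding standard_digits_def by blast
  obtain g where "primitive_annihilator \<alpha> g (degree g)"
    using primitive_annihilator_exists a0 assms(1) unfolding expanding_def by blast
  then have "G_nonempty \<alpha> D x" if "x \<in> Lambda \<alpha> m" for x
    using G_nonempty_of_digit_steps[OF a0 _ _ that] step
      primitive_annihilator.inverse_power_mult_in_localize by blast
  with step show ?thesis by blast
qed

end
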